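(* For every $N\ge2$, the set $\mathbb{S}_N\setminus\{\mathrm{id}\}$ is a union of pairwise disjoint subsets, each of which is either (a) a single permutation $\sigma$ for which there is an entry $\beta$ with $\sigma(\beta+1)=\beta$ and all entries of $\sigma$ in positions after $\beta+1$ greater than $\beta$; or (b) a pair $\{\sigma,\sigma'\}$ of permutations that differ only by an interchange of two adjacent entries $\alpha,\beta$, such that some entry $\gamma$ with $\gamma<\alpha$ and $\gamma<\beta$ appears to the right of $\alpha$ and $\beta$.
   Context: Permutations are written in one-line notation $\sigma(1)\sigma(2)\cdots\sigma(N)$, and "position $k$" refers to the $k$-th entry $\sigma(k)$. *)

theory Defs
  imports "HOL-Combinatorics.Permutations" "HOL-Library.Disjoint_Sets"
begin

text \<open>Permutations of {1..N} are functions \<sigma> with \<sigma> permutes {1..N};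
  position k holds the entry \<sigma> k.\<close>

definition typeA :: "nat \<Rightarrow> (nat \<Rightarrow> nat) \<Rightarrow> bool" where
  "typeA N \<sigma> \<longleftrightarrow> (\<exists>b. 1 \<le> b \<and> b + 1 \<le> N \<and> \<sigma> (b + 1) = b \<and>
      (\<forall>k. b + 1 < k \<and> k \<le> N \<longrightarrow> \<sigma> k > b))"

definition typeB :: "nat \<Rightarrow> (nat \<Rightarrow> nat) \<Rightarrow> (nat \<Rightarrow> nat) \<Rightarrow> bool" where
  "typeB N \<sigma> \<sigma>' \<longleftrightarrow> (\<exists>i. 1 \<le> i \<and> i + 1 \<le> N \<and>
      \<sigma>' i = \<sigma> (i + 1) \<and> \<sigma>' (i + 1) = \<sigma> i \<and>
      (\<forall>k. k \<noteq> i \<and> k \<noteq> i + 1 \<longrightarrow> \<sigma>' k = \<sigma> k) \<and>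
      (\<exists>j. i + 1 < j \<and> j \<le> N \<and> \<sigma> j < \<sigma> i \<and> \<sigma> j < \<sigma> (i + 1)))"

end

theory Submission
  imports Defs
begin

text \<open>Let m be the least entry of \<sigma> \<noteq> id that is not a fixed point and p its position,
  so \<sigma> fixes 1, ..., m - 1, p > m and every entry in a position \<ge> m is \<ge> m.
  If p = m + 1, then \<sigma> is of type (a) with \<beta> = m. Otherwise interchange the entries
  in positions p - 2 and p - 1: both exceed m, which lies to their right, and the
  interchange changes neither m nor p. Hence it is an involution on the remaining
  permutations whose orbits are pairs of type (b).\<close>

lemma partition_on_involution_orbits:
  assumes maps_to: "\<And>x. x \<in> S \<Longrightarrow> f x \<in> S"
    and involutive: "\<And>x. x \<in> S \<Longrightarrow> f (f x) = x"
  shows "partition_on S ((\<lambda>x. {x, f x}) ` S)"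
proof (rule partition_onI)
  have orbit_eq: "{a, f a} = {x, f x}" if "a \<in> S" "x \<in> {a, f a}" for a x
    using that involutive by auto
  show "\<Union> ((\<lambda>x. {x, f x}) ` S) = S"
    using maps_to by auto
  show "{} \<notin> (\<lambda>x. {x, f x}) ` S"
    by auto
  fix p q assume "p \<in> (\<lambda>x. {x, f x}) ` S" "q \<in> (\<lambda>x. {x, f x}) ` S" "p \<noteq> q"
  then show "disjnt p q"
    unfolding disjnt_def using orbit_eq by blast
qed

definition least_moved :: "(nat \<Rightarrow> nat) \<Rightarrow> nat" where
  "least_moved \<sigma> = (LEAST k. \<sigma> k \<noteq> k)"

definition least_moved_pos :: "(nat \<Rightarrow> nat) \<Rightarrow> nat" where
  "least_moved_pos \<sigma> = inv \<sigma> (least_moved \<sigma>)"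

lemma least_moved_moved: "\<sigma> \<noteq> id \<Longrightarrow> \<sigma> (least_moved \<sigma>) \<noteq> least_moved \<sigma>"
  unfolding least_moved_def by (rule LeastI_ex) (auto simp: fun_eq_iff)

lemma fixed_below_least_moved: "k < least_moved \<sigma> \<Longrightarrow> \<sigma> k = k"
  unfolding least_moved_def using not_less_Least by blast

lemma least_moved_eqI:
  assumes "\<sigma> m \<noteq> m" "\<And>k. k < m \<Longrightarrow> \<sigma> k = k"
  shows "least_moved \<sigma> = m"
  unfolding least_moved_def using assms by (intro Least_equality) (auto simp: not_le[symmetric])

lemma least_moved_le_apply:
  assumes "inj \<sigma>" "least_moved \<sigma> \<le> k"
  shows "least_moved \<sigma> \<le> \<sigma> k"
proof (rule ccontr)
  assume "\<not> least_moved \<sigma> \<le> \<sigma> k"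
  then have "\<sigma> (\<sigma> k) = \<sigma> k"
    by (simp add: fixed_below_least_moved)
  then have "\<sigma> k = k"
    using \<open>inj \<sigma>\<close> by (simp add: inj_eq)
  with \<open>\<not> least_moved \<sigma> \<le> \<sigma> k\<close> \<open>least_moved \<sigma> \<le> k\<close> show False
    by simp
qed

lemma apply_least_moved_pos: "surj \<sigma> \<Longrightarrow> \<sigma> (least_moved_pos \<sigma>) = least_moved \<sigma>"
  unfolding least_moved_pos_def by (rule surj_f_inv_f)

lemma least_moved_posI: "inj \<sigma> \<Longrightarrow> \<sigma> k = least_moved \<sigma> \<Longrightarrow> least_moved_pos \<sigma> = k"
  unfolding least_moved_pos_def by (metis inv_f_f)

lemma least_moved_less_pos:
  assumes "bij \<sigma>" "\<sigma> \<noteq> id"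
  shows "least_moved \<sigma> < least_moved_pos \<sigma>"
proof -
  have "\<sigma> (least_moved_pos \<sigma>) = least_moved \<sigma>"
    using assms(1) by (simp add: apply_least_moved_pos bij_is_surj)
  moreover have "\<sigma> (least_moved \<sigma>) \<noteq> least_moved \<sigma>"
    using assms(2) by (rule least_moved_moved)
  ultimately show ?thesis
    using fixed_below_least_moved[of "least_moved_pos \<sigma>" \<sigma>] by (metis linorder_neqE_nat)
qed

lemma least_moved_comp_transpose:
  assumes "bij \<sigma>" "\<sigma> \<noteq> id" "least_moved \<sigma> \<le> i" "least_moved \<sigma> \<le> j"
    and "least_moved_pos \<sigma> \<noteq> i" "least_moved_pos \<sigma> \<noteq> j"
  shows "least_moved (\<sigma> \<circ> Transposition.transpose i j) = least_moved \<sigma>"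
proof (rule least_moved_eqI)
  have "\<sigma> k \<noteq> least_moved \<sigma>" if "k \<in> {i, j}" for k
    using least_moved_posI[OF bij_is_inj[OF assms(1)], of k] that assms(5,6) by auto
  then show "(\<sigma> \<circ> Transposition.transpose i j) (least_moved \<sigma>) \<noteq> least_moved \<sigma>"
    using least_moved_moved[OF assms(2)] by (auto simp: transpose_def)
  show "(\<sigma> \<circ> Transposition.transpose i j) k = k" if "k < least_moved \<sigma>" for k
    using that assms(3,4) by (simp add: fixed_below_least_moved)
qed

lemma least_moved_pos_comp_transpose:
  assumes "bij \<sigma>" "\<sigma> \<noteq> id" "least_moved \<sigma> \<le> i" "least_moved \<sigma> \<le> j"
    and "least_moved_pos \<sigma> \<noteq> i" "least_moved_pos \<sigma> \<noteq> j"
  shows "least_moved_pos (\<sigma> \<circ> Transposition.transpose i j) = least_moved_pos \<sigma>"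
proof (rule least_moved_posI)
  show "inj (\<sigma> \<circ> Transposition.transpose i j)"
    using assms(1) by (simp add: bij_is_inj inj_compose)
  show "(\<sigma> \<circ> Transposition.transpose i j) (least_moved_pos \<sigma>) =
      least_moved (\<sigma> \<circ> Transposition.transpose i j)"
    using assms by (simp add: least_moved_comp_transpose apply_least_moved_pos bij_is_surj)
qed

lemma typeB_comp_transpose:
  assumes "1 \<le> i" "i + 1 < j" "j \<le> N" "\<sigma> j < \<sigma> i" "\<sigma> j < \<sigma> (i + 1)"
  shows "typeB N \<sigma> (\<sigma> \<circ> Transposition.transpose i (i + 1))"
  unfolding typeB_def using assms by (intro exI[of _ i]) auto

definition partner :: "(nat \<Rightarrow> nat) \<Rightarrow> nat \<Rightarrow> nat" where
  "partner \<sigma> =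
    (if least_moved \<sigma> + 1 < least_moved_pos \<sigma>
     then \<sigma> \<circ> Transposition.transpose (least_moved_pos \<sigma> - 2) (least_moved_pos \<sigma> - 1)
     else \<sigma>)"

context
  fixes N :: nat and \<sigma> :: "nat \<Rightarrow> nat"
  assumes perm: "\<sigma> permutes {1..N}" and not_id: "\<sigma> \<noteq> id"
begin

private abbreviation (input) "m \<equiv> least_moved \<sigma>"
private abbreviation (input) "p \<equiv> least_moved_pos \<sigma>"

private lemma m_less_p: "m < p"
  using permutes_bij[OF perm] not_id by (rule least_moved_less_pos)

private lemma apply_p: "\<sigma> p = m"
  using permutes_surj[OF perm] by (rule apply_least_moved_pos)

private lemma m_less_apply: "m \<le> k \<Longrightarrow> k \<noteq> p \<Longrightarrow> m < \<sigma> k"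
  using least_moved_le_apply[OF permutes_inj[OF perm], of k]
    least_moved_posI[OF permutes_inj[OF perm], of k] by fastforce

lemma one_le_least_moved: "1 \<le> m"
  using permutes_not_in[OF perm] least_moved_moved[OF not_id] by fastforce

lemma least_moved_pos_le: "p \<le> N"
proof -
  have "\<sigma> p \<noteq> p"
    using m_less_p apply_p by simp
  then show ?thesis
    using permutes_not_in[OF perm] by fastforce
qed

lemma typeA_if_least_moved_pos_eq: "p = m + 1 \<Longrightarrow> typeA N \<sigma>"
  unfolding typeA_def
proof (intro exI[of _ m] conjI allI impI)
  assume p_eq: "p = m + 1"
  show "1 \<le> m" by (rule one_le_least_moved)
  show "m + 1 \<le> N" using least_moved_pos_le p_eq by simp
  show "\<sigma> (m + 1) = m" using apply_p p_eq by simp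
  show "m < \<sigma> k" if "m + 1 < k \<and> k \<le> N" for k
    using that p_eq m_less_apply by simp
qed

lemma typeB_partner:
  assumes long: "m + 1 < p"
  shows "typeB N \<sigma> (partner \<sigma>)"
proof -
  have "typeB N \<sigma> (\<sigma> \<circ> Transposition.transpose (p - 2) (p - 2 + 1))"
  proof (rule typeB_comp_transpose[where j = p])
    show "\<sigma> p < \<sigma> (p - 2)" "\<sigma> p < \<sigma> (p - 2 + 1)"
      using long m_less_apply apply_p by simp_all
  qed (use long one_le_least_moved least_moved_pos_le in simp_all)
  moreover have "p - 2 + 1 = p - 1"
    using long by simp
  ultimately show ?thesis
    using long by (simp add: partner_def)
qed

lemma partner_permutes: "partner \<sigma> permutes {1..N}"
  unfolding partner_def using perm one_le_least_moved least_moved_pos_le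
  by (auto intro!: permutes_compose permutes_swap_id)

lemma partner_not_id: "partner \<sigma> \<noteq> id"
proof
  assume "partner \<sigma> = id"
  then have "partner \<sigma> p = p"
    by simp
  moreover have "partner \<sigma> p = m"
    using apply_p by (simp add: partner_def)
  ultimately show False
    using m_less_p by simp
qed

lemma partner_partner: "partner (partner \<sigma>) = \<sigma>"
proof (cases "m + 1 < p")
  case True
  let ?t = "Transposition.transpose (p - 2) (p - 1)"
  have "least_moved (\<sigma> \<circ> ?t) = m" "least_moved_pos (\<sigma> \<circ> ?t) = p"
    using True permutes_bij[OF perm] not_id
    by (intro least_moved_comp_transpose least_moved_pos_comp_transpose; simp)+
  then show ?thesis
    using True by (simp add: partner_def comp_assoc)
next
  case False
  then show ?thesis
    by (simp add: partner_def)
qed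

lemma partner_orbit_cases:
  "(\<exists>\<rho>. {\<sigma>, partner \<sigma>} = {\<rho>} \<and> typeA N \<rho>) \<or>
   (\<exists>\<rho> \<rho>'. {\<sigma>, partner \<sigma>} = {\<rho>, \<rho>'} \<and> typeB N \<rho> \<rho>')"
proof (cases "m + 1 < p")
  case True
  then show ?thesis
    using typeB_partner by blast
next
  case False
  then have "p = m + 1"
    using m_less_p by simp
  with False show ?thesis
    using typeA_if_least_moved_pos_eq by (simp add: partner_def)
qed

end

theorem lemma3p9:
  fixes N :: nat
  assumes "N \<ge> 2"
  shows "\<exists>P. partition_on {\<sigma>. \<sigma> permutes {1..N} \<and> \<sigma> \<noteq> id} P \<and>
    (\<forall>B\<in>P. (\<exists>\<sigma>. B = {\<sigma>} \<and> typeA N \<sigma>) \<or>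
            (\<exists>\<sigma> \<sigma>'. B = {\<sigma>, \<sigma>'} \<and> typeB N \<sigma> \<sigma>'))"
proof -
  let ?S = "{\<sigma>. \<sigma> permutes {1..N} \<and> \<sigma> \<noteq> id}"
  have "partition_on ?S ((\<lambda>\<sigma>. {\<sigma>, partner \<sigma>}) ` ?S)"
    using partner_permutes partner_not_id partner_partner
    by (intro partition_on_involution_orbits) blast+
  moreover have "\<forall>B \<in> (\<lambda>\<sigma>. {\<sigma>, partner \<sigma>}) ` ?S.
      (\<exists>\<sigma>. B = {\<sigma>} \<and> typeA N \<sigma>) \<or> (\<exists>\<sigma> \<sigma>'. B = {\<sigma>, \<sigma>'} \<and> typeB N \<sigma> \<sigma>')"
    using partner_orbit_cases by blast
  ultimately show ?thesis
    by blast
qed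

end
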